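(* Let $\phi\in\mathbb{Z}[X]$ have degree at least one, let $x\neq0$ be any root of $\phi$, let $f\in\mathbb{Z}[X^{\pm}]$ and let $a,b\in\mathbb{N}$ with $a\neq b$. If $\phi^2$ divides $X^a-X^bf$, then $a-b=\frac{xf'(x)}{f(x)}$.
   Context: $\mathbb{Z}[X^{\pm}]$ is the ring of integer Laurent polynomials; $f'$ denotes the formal derivative of $f$. *)

theory Defs
  imports "HOL-Analysis.Analysis" "HOL-Computational_Algebra.Computational_Algebra"
begin

text \<open>Integer Laurent polynomials Z[X^{+-}] are represented as formal Laurent series over int
  with finitely many nonzero coefficients.\<close>

definition is_lpoly :: "int fls \<Rightarrow> bool" where
  "is_lpoly f \<longleftrightarrow> finite {n. fls_nth f n \<noteq> 0}"

definition poly_to_lpoly :: "int poly \<Rightarrow> int fls" where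
  "poly_to_lpoly p = fps_to_fls (fps_of_poly p)"

definition lpoly_eval :: "int fls \<Rightarrow> complex \<Rightarrow> complex" where
  "lpoly_eval f x = (\<Sum>n\<in>{n. fls_nth f n \<noteq> 0}. of_int (fls_nth f n) * x powi n)"

definition lpoly_dvd :: "int fls \<Rightarrow> int fls \<Rightarrow> bool" where
  "lpoly_dvd g h \<longleftrightarrow> (\<exists>q. is_lpoly q \<and> h = g * q)"

end

theory Submission
  imports Defs
begin

text \<open>Evaluation at a nonzero complex number \<open>x\<close> is a ring homomorphism on Laurent polynomials
  that turns \<open>fls_deriv\<close> into a derivation, so a Laurent polynomial divisible by \<open>\<phi>\<^sup>2\<close> vanishes
  together with its derivative at every root \<open>x\<close> of \<open>\<phi>\<close>. For \<open>h = X\<^sup>a - X\<^sup>b f\<close>, \<open>h(x) = 0\<close> gives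
  \<open>x\<^sup>b f(x) = x\<^sup>a \<noteq> 0\<close>, and \<open>x h'(x) = 0\<close> gives \<open>a x\<^sup>a = b x\<^sup>b f(x) + x\<^sup>b x f'(x)\<close>; dividing the
  second identity by the first yields the claim.\<close>

definition fls_supp :: "'a::zero fls \<Rightarrow> int set" where
  "fls_supp f = {n. fls_nth f n \<noteq> 0}"

lemma is_lpoly_iff_finite_supp: "is_lpoly f \<longleftrightarrow> finite (fls_supp f)"
  by (simp add: is_lpoly_def fls_supp_def)

lemma lpoly_eval_eq_sum:
  assumes "finite A" "fls_supp f \<subseteq> A"
  shows "lpoly_eval f x = (\<Sum>n\<in>A. of_int (fls_nth f n) * x powi n)"
  unfolding lpoly_eval_def
  by (rule sum.mono_neutral_left) (use assms in \<open>auto simp: fls_supp_def\<close>)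

lemma fls_supp_shift: "fls_supp (fls_shift m f) = (\<lambda>n. n - m) ` fls_supp f"
  by (force simp: fls_supp_def image_iff intro: exI[of _ "_ + m"])

lemma fls_supp_deriv: "fls_supp (fls_deriv f) \<subseteq> (\<lambda>n. n - 1) ` fls_supp f"
  by (force simp: fls_supp_def image_iff intro: exI[of _ "_ + 1"])

lemma fls_supp_poly_to_lpoly: "fls_supp (poly_to_lpoly p) \<subseteq> int ` {..degree p}"
proof
  fix n assume "n \<in> fls_supp (poly_to_lpoly p)"
  hence n: "n \<ge> 0" "coeff p (nat n) \<noteq> 0"
    by (simp_all add: fls_supp_def poly_to_lpoly_def split: if_splits)
  hence "nat n \<le> degree p" by (intro le_degree)
  with n show "n \<in> int ` {..degree p}" by (auto intro: image_eqI[of _ _ "nat n"])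
qed

lemma is_lpoly_shift: "is_lpoly f \<Longrightarrow> is_lpoly (fls_shift m f)"
  by (simp add: is_lpoly_iff_finite_supp fls_supp_shift)

lemma is_lpoly_deriv: "is_lpoly f \<Longrightarrow> is_lpoly (fls_deriv f)"
  unfolding is_lpoly_iff_finite_supp by (rule finite_subset[OF fls_supp_deriv]) simp

lemma is_lpoly_poly_to_lpoly: "is_lpoly (poly_to_lpoly p)"
  unfolding is_lpoly_iff_finite_supp by (rule finite_subset[OF fls_supp_poly_to_lpoly]) simp

lemma is_lpoly_X_power: "is_lpoly (fls_X ^ a)"
  unfolding is_lpoly_iff_finite_supp
  by (rule finite_subset[of _ "{int a}"]) (auto simp: fls_supp_def)

lemma is_lpoly_imp_shifted_poly:
  assumes "is_lpoly h"
  obtains N p where "h = fls_shift (int N) (poly_to_lpoly p)"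
proof -
  have fin: "finite (fls_supp h)" using assms by (simp add: is_lpoly_iff_finite_supp)
  define N where "N = nat (Max (abs ` fls_supp h \<union> {0}))"
  have bound: "\<bar>n\<bar> \<le> int N" if "n \<in> fls_supp h" for n
  proof -
    have "\<bar>n\<bar> \<le> Max (abs ` fls_supp h \<union> {0})" using fin that by (intro Max_ge) auto
    thus ?thesis unfolding N_def by linarith
  qed
  define p where "p = truncate_fps (2 * N + 1) (Abs_fps (\<lambda>k. fls_nth h (int k - int N)))"
  have "fls_nth h n = fls_nth (fls_shift (int N) (poly_to_lpoly p)) n" for n
  proof (cases "n \<in> fls_supp h")
    case True
    with bound[OF True] show ?thesis by (simp add: poly_to_lpoly_def p_def coeff_truncate_fps)
  next
    case False
    hence "fls_nth h n = 0" by (simp add: fls_supp_def)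
    moreover have "n + int N \<ge> 0 \<Longrightarrow> int (nat (n + int N)) - int N = n" by simp
    ultimately show ?thesis by (simp add: poly_to_lpoly_def p_def coeff_truncate_fps)
  qed
  hence "h = fls_shift (int N) (poly_to_lpoly p)" by (rule fls_eqI)
  thus thesis by (rule that)
qed

lemma poly_to_lpoly_mult: "poly_to_lpoly (p * q) = poly_to_lpoly p * poly_to_lpoly q"
  by (simp add: poly_to_lpoly_def fps_of_poly_mult fls_times_fps_to_fls)

lemma is_lpoly_mult:
  assumes "is_lpoly f" "is_lpoly g"
  shows "is_lpoly (f * g)"
proof -
  obtain M p where "f = fls_shift (int M) (poly_to_lpoly p)"
    using assms(1) by (rule is_lpoly_imp_shifted_poly)
  moreover obtain N q where "g = fls_shift (int N) (poly_to_lpoly q)"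
    using assms(2) by (rule is_lpoly_imp_shifted_poly)
  ultimately show ?thesis
    by (simp add: fls_times_both_shifted_simp poly_to_lpoly_mult[symmetric]
        is_lpoly_shift is_lpoly_poly_to_lpoly)
qed

lemma lpoly_eval_add:
  assumes "is_lpoly f" "is_lpoly g"
  shows "lpoly_eval (f + g) x = lpoly_eval f x + lpoly_eval g x"
proof -
  let ?A = "fls_supp f \<union> fls_supp g"
  have "finite ?A" using assms by (simp add: is_lpoly_iff_finite_supp)
  moreover have "fls_supp (f + g) \<subseteq> ?A" by (auto simp: fls_supp_def)
  ultimately show ?thesis
    by (simp add: lpoly_eval_eq_sum[of ?A] sum.distrib distrib_right)
qed

lemma lpoly_eval_diff:
  assumes "is_lpoly f" "is_lpoly g"
  shows "lpoly_eval (f - g) x = lpoly_eval f x - lpoly_eval g x"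
proof -
  let ?A = "fls_supp f \<union> fls_supp g"
  have "finite ?A" using assms by (simp add: is_lpoly_iff_finite_supp)
  moreover have "fls_supp (f - g) \<subseteq> ?A" by (auto simp: fls_supp_def)
  ultimately show ?thesis
    by (simp add: lpoly_eval_eq_sum[of ?A] sum_subtractf left_diff_distrib)
qed

lemma lpoly_eval_shift:
  assumes "x \<noteq> 0"
  shows "lpoly_eval (fls_shift m f) x = x powi (-m) * lpoly_eval f x"
proof -
  have inj: "inj_on (\<lambda>n. n - m) (fls_supp f)" by (auto simp: inj_on_def)
  have "lpoly_eval (fls_shift m f) x
      = (\<Sum>n\<in>fls_supp (fls_shift m f). of_int (fls_nth (fls_shift m f) n) * x powi n)"
    by (simp add: lpoly_eval_def fls_supp_def)
  also have "\<dots> = (\<Sum>n\<in>fls_supp f. of_int (fls_nth f n) * x powi (n - m))"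
    unfolding fls_supp_shift by (simp add: sum.reindex[OF inj])
  also have "\<dots> = (\<Sum>n\<in>fls_supp f. x powi (-m) * (of_int (fls_nth f n) * x powi n))"
    using assms by (intro sum.cong) (auto simp: power_int_diff power_int_minus field_simps)
  finally show ?thesis by (simp add: sum_distrib_left lpoly_eval_def fls_supp_def)
qed

lemma lpoly_eval_poly_to_lpoly: "lpoly_eval (poly_to_lpoly p) x = poly (map_poly of_int p) x"
proof -
  have "lpoly_eval (poly_to_lpoly p) x
      = (\<Sum>n\<in>int ` {..degree p}. of_int (fls_nth (poly_to_lpoly p) n) * x powi n)"
    by (rule lpoly_eval_eq_sum[OF _ fls_supp_poly_to_lpoly]) simp
  also have "\<dots> = (\<Sum>k\<le>degree p. coeff (map_poly of_int p) k * x ^ k)"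
    by (subst sum.reindex) (auto simp: poly_to_lpoly_def coeff_map_poly)
  finally show ?thesis by (simp add: poly_altdef degree_map_poly)
qed

lemma lpoly_eval_mult:
  assumes "is_lpoly f" "is_lpoly g" "x \<noteq> 0"
  shows "lpoly_eval (f * g) x = lpoly_eval f x * lpoly_eval g x"
proof -
  obtain M p where f: "f = fls_shift (int M) (poly_to_lpoly p)"
    using assms(1) by (rule is_lpoly_imp_shifted_poly)
  obtain N q where g: "g = fls_shift (int N) (poly_to_lpoly q)"
    using assms(2) by (rule is_lpoly_imp_shifted_poly)
  have "f * g = fls_shift (int M + int N) (poly_to_lpoly (p * q))"
    by (simp add: f g fls_times_both_shifted_simp poly_to_lpoly_mult)
  moreover have "x powi (- (int M + int N)) = x powi (- int M) * x powi (- int N)"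
    using assms(3) by (simp add: power_int_add[symmetric])
  moreover have "map_poly (of_int :: int \<Rightarrow> complex) (p * q) = map_poly of_int p * map_poly of_int q"
    by (rule poly_eqI) (simp add: coeff_mult coeff_map_poly)
  ultimately show ?thesis
    using assms(3) by (simp add: f g lpoly_eval_shift lpoly_eval_poly_to_lpoly)
qed

lemma lpoly_eval_X_power: "lpoly_eval (fls_X ^ a) x = x ^ a"
  by (subst lpoly_eval_eq_sum[of "{int a}"]) (auto simp: fls_supp_def)

lemma lpoly_eval_deriv_X_power:
  assumes "x \<noteq> 0"
  shows "x * lpoly_eval (fls_deriv (fls_X ^ a)) x = of_nat a * x ^ a"
proof -
  have "lpoly_eval (fls_deriv (fls_X ^ a)) x = of_nat a * x powi (int a - 1)"
    by (subst lpoly_eval_eq_sum[of "{int a - 1}"]) (auto simp: fls_supp_def)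
  moreover have "x * x powi (int a - 1) = x ^ a"
    using assms by (simp add: power_int_diff power_int_of_nat)
  ultimately show ?thesis by (simp add: mult.left_commute)
qed

lemma lpoly_eval_deriv_mult:
  assumes "is_lpoly f" "is_lpoly g" "x \<noteq> 0"
  shows "lpoly_eval (fls_deriv (f * g)) x
    = lpoly_eval f x * lpoly_eval (fls_deriv g) x + lpoly_eval (fls_deriv f) x * lpoly_eval g x"
  using assms
  by (simp add: lpoly_eval_add lpoly_eval_mult is_lpoly_mult is_lpoly_deriv)

lemma lpoly_eval_square_multiple_at_root:
  assumes "is_lpoly p" "is_lpoly q" "x \<noteq> 0" "lpoly_eval p x = 0"
  shows "lpoly_eval (p\<^sup>2 * q) x = 0" and "lpoly_eval (fls_deriv (p\<^sup>2 * q)) x = 0"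
proof -
  have pq: "is_lpoly (p * q)" "lpoly_eval (p * q) x = 0"
    using assms by (simp_all add: is_lpoly_mult lpoly_eval_mult)
  have eq: "p\<^sup>2 * q = p * (p * q)" by (simp add: power2_eq_square mult.assoc)
  show "lpoly_eval (p\<^sup>2 * q) x = 0" "lpoly_eval (fls_deriv (p\<^sup>2 * q)) x = 0"
    unfolding eq using assms pq
    by (simp_all add: lpoly_eval_mult lpoly_eval_deriv_mult del: fls_deriv_mult)
qed

lemma lpoly_eval_deriv_X_power_mult:
  assumes "is_lpoly f" "x \<noteq> 0"
  shows "x * lpoly_eval (fls_deriv (fls_X ^ b * f)) x
    = x ^ b * (of_nat b * lpoly_eval f x + x * lpoly_eval (fls_deriv f) x)"
  using assms lpoly_eval_deriv_X_power[OF assms(2), of b]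
  by (simp add: lpoly_eval_deriv_mult lpoly_eval_X_power is_lpoly_X_power algebra_simps
      del: fls_deriv_mult)

theorem lemma15:
  fixes \<phi> :: "int poly" and x :: complex and f :: "int fls" and a b :: nat
  assumes "degree \<phi> \<ge> 1"
    and "x \<noteq> 0"
    and "poly (map_poly of_int \<phi>) x = 0"
    and "is_lpoly f"
    and "a \<noteq> b"
    and "lpoly_dvd ((poly_to_lpoly \<phi>)\<^sup>2) (fls_X ^ a - fls_X ^ b * f)"
  shows "of_int (int a - int b) = x * lpoly_eval (fls_deriv f) x / lpoly_eval f x"
proof -
  let ?F = "lpoly_eval f x" and ?F' = "lpoly_eval (fls_deriv f) x"
  let ?h = "fls_X ^ a - fls_X ^ b * f"
  obtain q where "is_lpoly q" and h: "?h = (poly_to_lpoly \<phi>)\<^sup>2 * q"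
    using assms(6) unfolding lpoly_dvd_def by blast
  moreover have "lpoly_eval (poly_to_lpoly \<phi>) x = 0"
    using assms(3) by (simp add: lpoly_eval_poly_to_lpoly)
  ultimately have "lpoly_eval ?h x = 0" "lpoly_eval (fls_deriv ?h) x = 0"
    unfolding h using assms(2) is_lpoly_poly_to_lpoly by (blast intro: lpoly_eval_square_multiple_at_root)+
  moreover have "lpoly_eval ?h x = x ^ a - x ^ b * ?F"
    "x * lpoly_eval (fls_deriv ?h) x = of_nat a * x ^ a - x ^ b * (of_nat b * ?F + x * ?F')"
    using assms(2,4) lpoly_eval_deriv_X_power[OF assms(2), of a]
      lpoly_eval_deriv_X_power_mult[OF assms(4,2), of b]
    by (simp_all add: lpoly_eval_diff lpoly_eval_mult lpoly_eval_X_power is_lpoly_X_power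
        is_lpoly_mult is_lpoly_deriv right_diff_distrib del: fls_deriv_mult)
  ultimately have eval_h: "x ^ b * ?F = x ^ a"
    and "x ^ b * (x * ?F') = x ^ b * ((of_nat a - of_nat b) * ?F)"
    by (simp_all add: algebra_simps)
  hence "x * ?F' = (of_nat a - of_nat b) * ?F" using assms(2) by simp
  moreover have "?F \<noteq> 0" using eval_h assms(2) by auto
  ultimately show ?thesis by (simp add: field_simps)
qed

end
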